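(* Let $X$ be a finite nonempty alphabet and $\mathcal{L}\subseteq 2^{X^*}$ a nontrivial, WP-recursive language family closed under finite unions, finite intersections and complementation. Let $C,A\subseteq X^*$ be recursive languages with $A$ infinite, $A\cap C=\emptyset$, and $A\notin\mathit{cclass}_1(C,\mathcal{L})$. Then there is a recursive language $B\subseteq A$ with $B\in\mathit{ccore}_1(C,\mathcal{L})$.
   Context: $\mathcal{L}$ is nontrivial if $\emptyset,X^*\in\mathcal{L}$ and for all $Q\in\mathcal{L}$ and finite $E\subseteq X^*$ both $Q\cup E\in\mathcal{L}$ and $Q\setminus E\in\mathcal{L}$. $\mathcal{L}$ is WP-recursive if there is a surjection $e:\mathbb{N}_0\to\mathcal{L}$ such that the predicate "$w\in e(i)$" (for $i\in\mathbb{N}_0$, $w\in X^*$) is decidable (uniformly in $i$ and $w$). For $C\subseteq X^*$ and an infinite $A\subseteq X^*\setminus C$: $A\in\mathit{cclass}_1(C,\mathcal{L})$ iff there is $Q\in\mathcal{L}$ with $X^*\setminus Q\in\mathcal{L}$, $C\subseteq Q$ and $A\subseteq X^*\setminus Q$; $B\in\mathit{ccore}_1(C,\mathcal{L})$ iff $B$ is an infinite subset of $X^*\setminus C$ and every infinite $B'\subseteq B$ satisfies $B'\notin\mathit{cclass}_1(C,\mathcal{L})$. *)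

theory Defs
  imports Main "HOL-Library.Nat_Bijection"
begin

datatype recf = Zero | Succ | Proj nat | Comp recf "recf list" | PrimRec recf recf | Minim recf

inductive eval :: "recf \<Rightarrow> nat list \<Rightarrow> nat \<Rightarrow> bool" where
  eval_Zero: "eval Zero xs 0"
| eval_Succ: "eval Succ (x # xs) (Suc x)"
| eval_Proj: "i < length xs \<Longrightarrow> eval (Proj i) xs (xs ! i)"
| eval_Comp: "list_all2 (\<lambda>g y. eval g xs y) gs ys \<Longrightarrow> eval f ys y \<Longrightarrow> eval (Comp f gs) xs y"
| eval_Pr0: "eval f xs y \<Longrightarrow> eval (PrimRec f g) (0 # xs) y"
| eval_PrS: "eval (PrimRec f g) (n # xs) y \<Longrightarrow> eval g (n # y # xs) z
             \<Longrightarrow> eval (PrimRec f g) (Suc n # xs) z"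
| eval_Mn: "eval f (n # xs) 0 \<Longrightarrow> (\<forall>m<n. \<exists>k. eval f (m # xs) (Suc k))
             \<Longrightarrow> eval (Minim f) xs n"

definition computable1 :: "(nat \<Rightarrow> nat) \<Rightarrow> bool" where
  "computable1 f \<longleftrightarrow> (\<exists>r. \<forall>x. eval r [x] (f x))"

definition computable2 :: "(nat \<Rightarrow> nat \<Rightarrow> nat) \<Rightarrow> bool" where
  "computable2 f \<longleftrightarrow> (\<exists>r. \<forall>x y. eval r [x, y] (f x y))"

section \<open>Words over the alphabet X = {0..<k}\<close>

definition words :: "nat \<Rightarrow> nat list set" where
  "words k = lists {0..<k}"

definition recursive_lang :: "nat list set \<Rightarrow> bool" where
  "recursive_lang L \<longleftrightarrow> computable1 (\<lambda>n. if list_decode n \<in> L then 1 else 0)"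

definition nontrivial :: "nat \<Rightarrow> nat list set set \<Rightarrow> bool" where
  "nontrivial k \<L> \<longleftrightarrow> {} \<in> \<L> \<and> words k \<in> \<L> \<and>
     (\<forall>Q\<in>\<L>. \<forall>E. finite E \<and> E \<subseteq> words k \<longrightarrow> Q \<union> E \<in> \<L> \<and> Q - E \<in> \<L>)"

definition WP_recursive :: "nat list set set \<Rightarrow> bool" where
  "WP_recursive \<L> \<longleftrightarrow> (\<exists>e :: nat \<Rightarrow> nat list set. range e = \<L> \<and>
     computable2 (\<lambda>i n. if list_decode n \<in> e i then 1 else 0))"

definition cclass1 :: "nat \<Rightarrow> nat list set \<Rightarrow> nat list set set \<Rightarrow> nat list set set" where
  "cclass1 k C \<L> = {A. infinite A \<and> A \<subseteq> words k - C \<and>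
     (\<exists>Q\<in>\<L>. words k - Q \<in> \<L> \<and> C \<subseteq> Q \<and> A \<subseteq> words k - Q)}"

definition ccore1 :: "nat \<Rightarrow> nat list set \<Rightarrow> nat list set set \<Rightarrow> nat list set set" where
  "ccore1 k C \<L> = {B. infinite B \<and> B \<subseteq> words k - C \<and>
     (\<forall>B'. B' \<subseteq> B \<and> infinite B' \<longrightarrow> B' \<notin> cclass1 k C \<L>)}"

end

theory Submission
  imports Defs "HOL-Library.Infinite_Set"
begin

text \<open>
  If only finitely many words of \<open>A\<close> lay in some finite intersection of members of
  \<open>\<L>\<close> containing \<open>C\<close>, removing them would leave a member of \<open>\<L>\<close>
  separating \<open>C\<close> from \<open>A\<close>. Hence, with \<open>e\<close> enumerating \<open>\<L>\<close>, we can choose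
  words \<open>b\<^sub>0 < b\<^sub>1 < \<dots>\<close> of \<open>A\<close> (in the coding of words by numbers) such that
  \<open>b\<^sub>n\<close> lies in every \<open>e i\<close>, \<open>i \<le> n\<close>, that contains \<open>C\<close>. As \<open>C \<subseteq> e i\<close> is not
  decidable, \<open>b\<^sub>n\<close> is taken to be the least \<open>w > b\<^sub>n\<^sub>-\<^sub>1\<close> in \<open>A\<close> such that each
  \<open>e i\<close>, \<open>i \<le> n\<close>, contains \<open>w\<close> or is already seen to miss a word of \<open>C\<close> below \<open>w\<close>;
  the second alternative never applies when \<open>C \<subseteq> e i\<close>. Because the \<open>b\<^sub>n\<close> increase,
  \<open>B = {b\<^sub>n}\<close> is recursive, and each \<open>e i \<supseteq> C\<close> contains all \<open>b\<^sub>n\<close> with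
  \<open>n \<ge> i\<close>, so no infinite subset of \<open>B\<close> is separated from \<open>C\<close> by \<open>\<L>\<close>.
\<close>

section \<open>Computable functions on tuples of natural numbers\<close>

definition computable :: "nat \<Rightarrow> (nat list \<Rightarrow> nat) \<Rightarrow> bool" where
  "computable n f \<longleftrightarrow> (\<exists>r. \<forall>xs. length xs = n \<longrightarrow> eval r xs (f xs))"

definition decidable :: "nat \<Rightarrow> (nat list \<Rightarrow> bool) \<Rightarrow> bool" where
  "decidable n P \<longleftrightarrow> computable n (\<lambda>xs. if P xs then 1 else 0)"

lemma computable_cong:
  "computable n f \<Longrightarrow> (\<And>xs. length xs = n \<Longrightarrow> f xs = g xs) \<Longrightarrow> computable n g"
  unfolding computable_def by metis

lemma decidable_cong:
  "decidable n P \<Longrightarrow> (\<And>xs. length xs = n \<Longrightarrow> P xs = Q xs) \<Longrightarrow> decidable n Q"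
  unfolding decidable_def by (erule computable_cong) simp

lemma computable1_iff: "computable1 f \<longleftrightarrow> computable 1 (\<lambda>xs. f (xs ! 0))"
  unfolding computable1_def computable_def
  by (metis length_0_conv length_Suc_conv length_Cons list.size(3) nth_Cons_0 One_nat_def)

lemma computable_computable2: "computable2 f \<Longrightarrow> computable 2 (\<lambda>xs. f (xs ! 0) (xs ! 1))"
  unfolding computable2_def computable_def
  by (metis (no_types) length_0_conv length_Suc_conv nth_Cons_0 nth_Cons_Suc numeral_2_eq_2 One_nat_def)

fun recf_const :: "nat \<Rightarrow> recf" where
  "recf_const 0 = Zero"
| "recf_const (Suc c) = Comp Succ [recf_const c]"

lemma eval_recf_const: "eval (recf_const c) xs c"
proof (induction c)
  case 0
  show ?case by (simp add: eval_Zero)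
next
  case (Suc c)
  have "eval (Comp Succ [recf_const c]) xs (Suc c)"
    by (rule eval_Comp[where ys = "[c]"]) (simp_all add: Suc eval_Succ)
  then show ?case by simp
qed

lemma computable_const: "computable n (\<lambda>_. c)"
  unfolding computable_def using eval_recf_const by blast

lemma computable_nth: "i < n \<Longrightarrow> computable n (\<lambda>xs. xs ! i)"
  unfolding computable_def by (metis eval_Proj)

lemma computable_Suc:
  assumes "computable n f"
  shows "computable n (\<lambda>xs. Suc (f xs))"
proof -
  obtain r where r: "\<forall>xs. length xs = n \<longrightarrow> eval r xs (f xs)"
    using assms computable_def by blast
  have "eval (Comp Succ [r]) xs (Suc (f xs))" if "length xs = n" for xs
    by (rule eval_Comp[where ys = "[f xs]"]) (simp_all add: r that eval_Succ)
  then show ?thesis unfolding computable_def by blast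
qed

lemma ex_program_list:
  assumes "\<forall>g \<in> set gs. computable n g"
  shows "\<exists>rs. list_all2 (\<lambda>r g. \<forall>xs. length xs = n \<longrightarrow> eval r xs (g xs)) rs gs"
  using assms
proof (induction gs)
  case Nil
  show ?case by auto
next
  case (Cons g gs)
  then obtain rs where "list_all2 (\<lambda>r g. \<forall>xs. length xs = n \<longrightarrow> eval r xs (g xs)) rs gs"
    by auto
  moreover obtain r where "\<forall>xs. length xs = n \<longrightarrow> eval r xs (g xs)"
    using Cons.prems computable_def by auto
  ultimately show ?case by (intro exI[of _ "r # rs"]) auto
qed

lemma computable_compose:
  assumes "computable (length gs) f" and "\<forall>g \<in> set gs. computable n g"
  shows "computable n (\<lambda>xs. f (map (\<lambda>g. g xs) gs))"
proof -
  obtain rf where rf: "\<forall>ys. length ys = length gs \<longrightarrow> eval rf ys (f ys)"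
    using assms(1) computable_def by blast
  obtain rs where rs: "list_all2 (\<lambda>r g. \<forall>xs. length xs = n \<longrightarrow> eval r xs (g xs)) rs gs"
    using ex_program_list assms(2) by blast
  have "eval (Comp rf rs) xs (f (map (\<lambda>g. g xs) gs))" if "length xs = n" for xs
  proof (rule eval_Comp)
    show "list_all2 (\<lambda>g y. eval g xs y) rs (map (\<lambda>g. g xs) gs)"
      unfolding list_all2_map2 by (rule list_all2_mono[OF rs]) (simp add: that)
    show "eval rf (map (\<lambda>g. g xs) gs) (f (map (\<lambda>g. g xs) gs))"
      using rf by simp
  qed
  then show ?thesis unfolding computable_def by blast
qed

lemma computable_compose1:
  "computable 1 (\<lambda>xs. F (xs ! 0)) \<Longrightarrow> computable n f \<Longrightarrow> computable n (\<lambda>xs. F (f xs))"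
  using computable_compose[of "[f]" "\<lambda>xs. F (xs ! 0)" n] by simp

lemma computable_compose2:
  "computable 2 (\<lambda>xs. F (xs ! 0) (xs ! 1)) \<Longrightarrow> computable n f \<Longrightarrow> computable n g \<Longrightarrow>
   computable n (\<lambda>xs. F (f xs) (g xs))"
  using computable_compose[of "[f, g]" "\<lambda>xs. F (xs ! 0) (xs ! 1)" n]
  by (simp add: numeral_2_eq_2)

lemma computable_compose3:
  "computable 3 (\<lambda>xs. F (xs ! 0) (xs ! 1) (xs ! 2)) \<Longrightarrow>
   computable n f \<Longrightarrow> computable n g \<Longrightarrow> computable n h \<Longrightarrow>
   computable n (\<lambda>xs. F (f xs) (g xs) (h xs))"
  using computable_compose[of "[f, g, h]" "\<lambda>xs. F (xs ! 0) (xs ! 1) (xs ! 2)" n]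
  by (simp add: numeral_eq_Suc)

lemma computable_rec_nat:
  assumes "computable n f" and "computable (Suc (Suc n)) g"
  shows "computable (Suc n) (\<lambda>xs. rec_nat (f (tl xs)) (\<lambda>m y. g (m # y # tl xs)) (hd xs))"
proof -
  obtain rf where rf: "\<forall>xs. length xs = n \<longrightarrow> eval rf xs (f xs)"
    using assms(1) computable_def by blast
  obtain rg where rg: "\<forall>xs. length xs = Suc (Suc n) \<longrightarrow> eval rg xs (g xs)"
    using assms(2) computable_def by blast
  have rec: "eval (PrimRec rf rg) (m # ys) (rec_nat (f ys) (\<lambda>m y. g (m # y # ys)) m)"
    if "length ys = n" for m ys
  proof (induction m)
    case 0
    show ?case using rf that by (simp add: eval_Pr0)
  next
    case (Suc m)
    then show ?case using rg that by (auto intro: eval_PrS)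
  qed
  have "eval (PrimRec rf rg) xs (rec_nat (f (tl xs)) (\<lambda>m y. g (m # y # tl xs)) (hd xs))"
    if "length xs = Suc n" for xs
    using that rec[of "tl xs" "hd xs"] by (cases xs) auto
  then show ?thesis unfolding computable_def by blast
qed

lemma computable_Least:
  assumes "computable (Suc n) f" and "\<And>xs. length xs = n \<Longrightarrow> \<exists>m. f (m # xs) = 0"
  shows "computable n (\<lambda>xs. LEAST m. f (m # xs) = 0)"
proof -
  obtain rf where rf: "\<forall>xs. length xs = Suc n \<longrightarrow> eval rf xs (f xs)"
    using assms(1) computable_def by blast
  have "eval (Minim rf) xs (LEAST m. f (m # xs) = 0)" if "length xs = n" for xs
  proof (rule eval_Mn)
    have "f ((LEAST m. f (m # xs) = 0) # xs) = 0"
      using assms(2)[OF that] by (rule LeastI_ex)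
    then show "eval rf ((LEAST m. f (m # xs) = 0) # xs) 0"
      using rf that by (metis length_Cons)
    show "\<forall>m < (LEAST m. f (m # xs) = 0). \<exists>k. eval rf (m # xs) (Suc k)"
    proof (intro allI impI)
      fix m assume "m < (LEAST m. f (m # xs) = 0)"
      then have "f (m # xs) = Suc (f (m # xs) - 1)"
        using not_less_Least by fastforce
      then show "\<exists>k. eval rf (m # xs) (Suc k)"
        using rf that by (metis length_Cons)
    qed
  qed
  then show ?thesis unfolding computable_def by blast
qed

lemma computable_if_zero:
  assumes "computable n f" and "computable n g" and "computable n h"
  shows "computable n (\<lambda>xs. if f xs = 0 then g xs else h xs)"
proof -
  have case_zero: "rec_nat a (\<lambda>m y. b) c = (if c = 0 then a else b)" for a b c :: nat
    by (cases c) auto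
  have "computable (Suc (Suc (Suc 0)))
      (\<lambda>xs. rec_nat (tl xs ! 0) (\<lambda>m y. (m # y # tl xs) ! 3) (hd xs))"
    by (rule computable_rec_nat) (auto intro: computable_nth)
  then have "computable 3 (\<lambda>xs. if xs ! 0 = 0 then xs ! 1 else xs ! 2)"
    unfolding numeral_3_eq_3
    by (rule computable_cong) (auto simp: length_Suc_conv case_zero)
  then show ?thesis using assms by (rule computable_compose3)
qed

lemma computable_pred: "computable 1 (\<lambda>xs. xs ! 0 - 1)"
proof -
  have pred: "rec_nat 0 (\<lambda>m y. m) c = c - 1" for c :: nat
    by (cases c) auto
  have "computable (Suc 0) (\<lambda>xs. rec_nat 0 (\<lambda>m y. (m # y # tl xs) ! 0) (hd xs))"
    by (rule computable_rec_nat) (auto intro: computable_const computable_nth)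
  then show ?thesis
    unfolding One_nat_def by (rule computable_cong) (auto simp: length_Suc_conv pred)
qed

lemma computable_diff:
  assumes "computable n f" and "computable n g"
  shows "computable n (\<lambda>xs. f xs - g xs)"
proof -
  have sub: "rec_nat b (\<lambda>m y. y - Suc 0) a = b - a" for a b :: nat
    by (induction a) auto
  have "computable (Suc (Suc 1)) (\<lambda>zs. zs ! 1 - 1)"
    by (rule computable_compose1[OF computable_pred computable_nth]) simp
  then have "computable (Suc (Suc 0))
      (\<lambda>xs. rec_nat (tl xs ! 0) (\<lambda>m y. (m # y # tl xs) ! 1 - 1) (hd xs))"
    by (intro computable_rec_nat computable_nth) simp_all
  then have "computable 2 (\<lambda>xs. xs ! 1 - xs ! 0)"
    unfolding numeral_2_eq_2 by (rule computable_cong) (auto simp: length_Suc_conv sub)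
  from computable_compose2[OF this assms(2,1)] show ?thesis .
qed

lemma decidable_compose:
  "decidable (length gs) P \<Longrightarrow> \<forall>g \<in> set gs. computable n g \<Longrightarrow>
   decidable n (\<lambda>xs. P (map (\<lambda>g. g xs) gs))"
  unfolding decidable_def by (rule computable_compose)

lemma decidable_compose1:
  "decidable 1 (\<lambda>xs. P (xs ! 0)) \<Longrightarrow> computable n f \<Longrightarrow> decidable n (\<lambda>xs. P (f xs))"
  unfolding decidable_def by (rule computable_compose1)

lemma decidable_compose2:
  "decidable 2 (\<lambda>xs. P (xs ! 0) (xs ! 1)) \<Longrightarrow> computable n f \<Longrightarrow> computable n g \<Longrightarrow>
   decidable n (\<lambda>xs. P (f xs) (g xs))"
  unfolding decidable_def by (rule computable_compose2)

lemma decidable_not: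
  assumes "decidable n P"
  shows "decidable n (\<lambda>xs. \<not> P xs)"
proof -
  have "computable n (\<lambda>xs. if (if P xs then 1 else 0) = (0::nat) then 1 else 0)"
    using assms unfolding decidable_def by (intro computable_if_zero computable_const)
  then show ?thesis unfolding decidable_def by (rule computable_cong) simp
qed

lemma decidable_conj:
  assumes "decidable n P" and "decidable n Q"
  shows "decidable n (\<lambda>xs. P xs \<and> Q xs)"
proof -
  have "computable n (\<lambda>xs. if (if P xs then 1 else 0) = (0::nat) then 0 else if Q xs then 1 else 0)"
    using assms unfolding decidable_def by (intro computable_if_zero computable_const)
  then show ?thesis unfolding decidable_def by (rule computable_cong) simp
qed

lemma decidable_disj: "decidable n P \<Longrightarrow> decidable n Q \<Longrightarrow> decidable n (\<lambda>xs. P xs \<or> Q xs)"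
  using decidable_not[OF decidable_conj[OF decidable_not decidable_not]] by simp

lemma decidable_less:
  assumes "computable n f" and "computable n g"
  shows "decidable n (\<lambda>xs. f xs < g xs)"
proof -
  have "computable n (\<lambda>xs. if g xs - f xs = 0 then 0 else 1)"
    using assms by (intro computable_if_zero computable_diff computable_const)
  then show ?thesis unfolding decidable_def by (rule computable_cong) simp
qed

lemma decidable_eq:
  assumes "computable n f" and "computable n g"
  shows "decidable n (\<lambda>xs. f xs = g xs)"
proof -
  have "decidable n (\<lambda>xs. \<not> f xs < g xs \<and> \<not> g xs < f xs)"
    using assms by (intro decidable_conj decidable_not decidable_less)
  then show ?thesis by (rule decidable_cong) auto
qed

lemma drop_map_nth: "length zs = m \<Longrightarrow> map (\<lambda>i. zs ! i) [k..<m] = drop k zs"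
  by (rule nth_equalityI) auto

lemma decidable_bex_less:
  assumes "decidable (Suc n) P" and "computable n f"
  shows "decidable n (\<lambda>xs. \<exists>c < f xs. P (c # xs))"
proof -
  let ?gs = "map (\<lambda>i zs. zs ! i) (0 # [2..<Suc (Suc n)])"
  have "length ?gs = Suc n" by (simp del: upt_Suc)
  then have "decidable (Suc (Suc n)) (\<lambda>zs. P (map (\<lambda>g. g zs) ?gs))"
    using assms(1) by (intro decidable_compose) (auto intro: computable_nth)
  then have "decidable (Suc (Suc n)) (\<lambda>zs. P (zs ! 0 # drop 2 zs))"
    by (rule decidable_cong) (simp del: upt_Suc add: drop_map_nth[symmetric] comp_def)
  then have "decidable (Suc (Suc n)) (\<lambda>zs. 0 < zs ! 1 \<or> P (zs ! 0 # drop 2 zs))"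
    by (intro decidable_disj decidable_less computable_const computable_nth) auto
  then have "computable (Suc n) (\<lambda>ys. rec_nat 0
      (\<lambda>m y. if 0 < (m # y # tl ys) ! 1 \<or> P ((m # y # tl ys) ! 0 # drop 2 (m # y # tl ys))
              then 1 else 0) (hd ys))"
    unfolding decidable_def by (intro computable_rec_nat computable_const)
  moreover have "rec_nat 0 (\<lambda>m y. if 0 < y \<or> P (m # t) then 1 else 0) b
      = (if \<exists>c < b. P (c # t) then 1 else (0::nat))" for b t
    by (induction b) (auto simp: less_Suc_eq)
  ultimately have "decidable (Suc n) (\<lambda>ys. \<exists>c < hd ys. P (c # tl ys))"
    unfolding decidable_def by (elim computable_cong) simp
  then have "decidable (length (f # map (\<lambda>i xs. xs ! i) [0..<n]))
      (\<lambda>ys. \<exists>c < hd ys. P (c # tl ys))"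
    by simp
  from decidable_compose[OF this, of n]
  have "decidable n (\<lambda>xs. \<exists>c < f xs. P (c # map (\<lambda>i. xs ! i) [0..<n]))"
    using assms(2) by (simp add: comp_def computable_nth)
  then show ?thesis
    by (rule decidable_cong) (metis map_nth)
qed

lemma computable_Least_decidable:
  assumes "decidable (Suc n) P" and "\<And>xs. length xs = n \<Longrightarrow> \<exists>m. P (m # xs)"
  shows "computable n (\<lambda>xs. LEAST m. P (m # xs))"
proof -
  have "computable (Suc n) (\<lambda>xs. if (if P xs then 1 else 0) = (0::nat) then 1 else 0)"
    using assms(1) unfolding decidable_def by (intro computable_if_zero computable_const)
  then have "computable n (\<lambda>xs. LEAST m. (if (if P (m # xs) then 1 else 0) = (0::nat) then 1 else 0) = (0::nat))"
    by (rule computable_Least) (use assms(2) in auto)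
  then show ?thesis by (rule computable_cong) simp
qed

section \<open>Effective diagonal choice\<close>

locale diagonal_pick =
  fixes a c :: "nat \<Rightarrow> bool" and E :: "nat \<Rightarrow> nat \<Rightarrow> bool"
begin

definition refuted :: "nat \<Rightarrow> nat \<Rightarrow> bool" where
  "refuted i s \<longleftrightarrow> (\<exists>x < s. c x \<and> \<not> E i x)"

definition admissible :: "nat \<Rightarrow> nat \<Rightarrow> bool" where
  "admissible n w \<longleftrightarrow> a w \<and> (\<forall>i \<le> n. refuted i w \<or> E i w)"

definition next_pick :: "nat \<Rightarrow> nat \<Rightarrow> nat" where
  "next_pick n p = (LEAST w. p < w \<and> admissible n w)"

primrec pick :: "nat \<Rightarrow> nat" where
  "pick 0 = next_pick 0 0"
| "pick (Suc m) = next_pick (Suc m) (pick m)"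

lemma refuted_mono: "refuted i s \<Longrightarrow> s \<le> t \<Longrightarrow> refuted i t"
  unfolding refuted_def by (meson less_le_trans)

lemma eventually_refuted: "\<exists>s. \<forall>i < n. \<not> (\<forall>x. c x \<longrightarrow> E i x) \<longrightarrow> refuted i s"
proof (induction n)
  case 0
  show ?case by simp
next
  case (Suc n)
  then obtain s where s: "\<forall>i < n. \<not> (\<forall>x. c x \<longrightarrow> E i x) \<longrightarrow> refuted i s"
    by blast
  show ?case
  proof (cases "\<forall>x. c x \<longrightarrow> E n x")
    case True
    then show ?thesis using s less_Suc_eq by auto
  next
    case False
    then obtain x where "c x" "\<not> E n x" by blast
    then have "refuted n (max s (Suc x))" unfolding refuted_def by (intro exI[of _ x]) auto
    then show ?thesis using s refuted_mono less_Suc_eq by (metis max.cobounded1)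
  qed
qed

context
  assumes infinite_candidates: "\<And>n. infinite {w. a w \<and> (\<forall>i \<le> n. (\<forall>x. c x \<longrightarrow> E i x) \<longrightarrow> E i w)}"
begin

lemma admissible_unbounded: "\<exists>w. p < w \<and> admissible n w"
proof -
  obtain s where s: "\<forall>i < Suc n. \<not> (\<forall>x. c x \<longrightarrow> E i x) \<longrightarrow> refuted i s"
    using eventually_refuted by blast
  obtain w where w: "max p s < w" "a w" "\<forall>i \<le> n. (\<forall>x. c x \<longrightarrow> E i x) \<longrightarrow> E i w"
    using infinite_candidates[of n] unfolding infinite_nat_iff_unbounded by blast
  have "admissible n w"
    unfolding admissible_def using w s refuted_mono by (metis less_Suc_eq_le less_imp_le max.strict_boundedE)
  then show ?thesis using w(1) by auto
qed

lemma next_pick: "p < next_pick n p \<and> admissible n (next_pick n p)"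
  unfolding next_pick_def by (rule LeastI_ex) (rule admissible_unbounded)

lemma strict_mono_pick: "strict_mono pick"
  unfolding strict_mono_Suc_iff by (simp add: next_pick)

lemma admissible_pick: "admissible m (pick m)"
  by (cases m) (simp_all add: next_pick)

lemma pick_candidate: "a (pick m)"
  using admissible_pick admissible_def by blast

lemma pick_in_good: "\<forall>x. c x \<longrightarrow> E i x \<Longrightarrow> i \<le> m \<Longrightarrow> E i (pick m)"
  using admissible_pick[of m] unfolding admissible_def refuted_def by blast

lemma range_pick_iff: "x \<in> range pick \<longleftrightarrow> (\<exists>m < Suc x. pick m = x)"
  using strict_mono_imp_increasing[OF strict_mono_pick] by (auto simp: less_Suc_eq_le)

context
  assumes decidable_a: "decidable 1 (\<lambda>xs. a (xs ! 0))"
    and decidable_c: "decidable 1 (\<lambda>xs. c (xs ! 0))"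
    and decidable_E: "decidable 2 (\<lambda>xs. E (xs ! 0) (xs ! 1))"
begin

lemma decidable_refuted: "decidable 2 (\<lambda>xs. refuted (xs ! 0) (xs ! 1))"
proof -
  have "decidable (Suc 2) (\<lambda>ys. c (ys ! 0) \<and> \<not> E (ys ! 1) (ys ! 0))"
    by (intro decidable_conj decidable_not decidable_compose1[OF decidable_c]
        decidable_compose2[OF decidable_E] computable_nth) auto
  from decidable_bex_less[OF this, of "\<lambda>xs. xs ! 1"]
  show ?thesis
    unfolding refuted_def by (simp add: computable_nth)
qed

lemma decidable_admissible: "decidable 2 (\<lambda>xs. admissible (xs ! 0) (xs ! 1))"
proof -
  have "decidable (Suc 2) (\<lambda>ys. \<not> refuted (ys ! 0) (ys ! 2) \<and> \<not> E (ys ! 0) (ys ! 2))"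
    by (intro decidable_conj decidable_not decidable_compose2[OF decidable_refuted]
        decidable_compose2[OF decidable_E] computable_nth) auto
  from decidable_bex_less[OF this, of "\<lambda>xs. Suc (xs ! 0)"]
  have "decidable 2 (\<lambda>xs. \<exists>i < Suc (xs ! 0). \<not> refuted i (xs ! 1) \<and> \<not> E i (xs ! 1))"
    by (simp add: computable_Suc computable_nth)
  then have "decidable 2 (\<lambda>xs. a (xs ! 1) \<and>
      \<not> (\<exists>i < Suc (xs ! 0). \<not> refuted i (xs ! 1) \<and> \<not> E i (xs ! 1)))"
    by (intro decidable_conj decidable_not decidable_compose1[OF decidable_a] computable_nth) auto
  then show ?thesis
    by (rule decidable_cong) (auto simp: admissible_def less_Suc_eq_le)
qed

lemma computable_next_pick: "computable 2 (\<lambda>xs. next_pick (xs ! 0) (xs ! 1))"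
proof -
  have "decidable (Suc 2) (\<lambda>ys. ys ! 2 < ys ! 0 \<and> admissible (ys ! 1) (ys ! 0))"
    by (intro decidable_conj decidable_less decidable_compose2[OF decidable_admissible]
        computable_nth) auto
  from computable_Least_decidable[OF this]
  have "computable 2 (\<lambda>xs. LEAST w. xs ! 1 < w \<and> admissible (xs ! 0) w)"
    using admissible_unbounded by simp
  then show ?thesis
    unfolding next_pick_def .
qed

lemma computable_pick: "computable 1 (\<lambda>xs. pick (xs ! 0))"
proof -
  have "computable (Suc (Suc 0)) (\<lambda>zs. next_pick (Suc (zs ! 0)) (zs ! 1))"
    by (intro computable_compose2[OF computable_next_pick] computable_Suc computable_nth) auto
  then have "computable (Suc 0)
      (\<lambda>xs. rec_nat (next_pick 0 0) (\<lambda>m y. next_pick (Suc ((m # y # tl xs) ! 0))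
        ((m # y # tl xs) ! 1)) (hd xs))"
    by (intro computable_rec_nat computable_const)
  moreover have "rec_nat (next_pick 0 0) (\<lambda>m y. next_pick (Suc m) y) m = pick m" for m
    by (induction m) auto
  ultimately show ?thesis
    unfolding One_nat_def by (elim computable_cong) (auto simp: length_Suc_conv)
qed

lemma decidable_range_pick: "decidable 1 (\<lambda>xs. xs ! 0 \<in> range pick)"
proof -
  have "decidable (Suc 1) (\<lambda>ys. pick (ys ! 0) = ys ! 1)"
    by (intro decidable_eq computable_compose1[OF computable_pick] computable_nth) auto
  from decidable_bex_less[OF this, of "\<lambda>xs. Suc (xs ! 0)"]
  show ?thesis
    unfolding range_pick_iff by (simp add: computable_Suc computable_nth)
qed

end

end

end

section \<open>Recursive \<open>ccore\<close> elements\<close>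

lemma infinite_Int_Inter_if_not_cclass1:
  assumes "nontrivial k \<L>"
    and Int_closed: "\<And>Q1 Q2. Q1 \<in> \<L> \<Longrightarrow> Q2 \<in> \<L> \<Longrightarrow> Q1 \<inter> Q2 \<in> \<L>"
    and compl_closed: "\<And>Q. Q \<in> \<L> \<Longrightarrow> words k - Q \<in> \<L>"
    and "C \<subseteq> words k" and "A \<subseteq> words k" and "infinite A" and "A \<inter> C = {}"
    and "A \<notin> cclass1 k C \<L>"
    and "finite I" and "I \<subseteq> \<L>" and "\<forall>Q \<in> I. C \<subseteq> Q"
  shows "infinite (A \<inter> \<Inter>I)"
proof
  assume finite: "finite (A \<inter> \<Inter>I)"
  have "words k \<inter> \<Inter>I \<in> \<L>"
    using \<open>finite I\<close> \<open>I \<subseteq> \<L>\<close>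
  proof (induction I rule: finite_induct)
    case empty
    then show ?case using \<open>nontrivial k \<L>\<close> by (simp add: nontrivial_def)
  next
    case (insert Q I)
    then have "Q \<inter> (words k \<inter> \<Inter>I) \<in> \<L>" by (intro Int_closed[of Q]) auto
    then show ?case by (simp add: Int_left_commute)
  qed
  then have "(words k \<inter> \<Inter>I) - (A \<inter> \<Inter>I) \<in> \<L>" (is "?Q \<in> \<L>")
    using \<open>nontrivial k \<L>\<close> finite \<open>A \<subseteq> words k\<close> unfolding nontrivial_def by blast
  moreover have "C \<subseteq> ?Q" and "A \<subseteq> words k - ?Q"
    using assms(4,5,7,11) by auto
  ultimately have "A \<in> cclass1 k C \<L>"
    using compl_closed assms(5-7) unfolding cclass1_def by blast
  then show False using assms(8) by blast
qed

lemma recursive_subset_almost_inside: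
  fixes e :: "nat \<Rightarrow> nat list set"
  assumes "recursive_lang A" and "recursive_lang C"
    and "computable2 (\<lambda>i n. if list_decode n \<in> e i then 1 else 0)"
    and infinite: "\<And>n. infinite (A \<inter> \<Inter>{e i | i. i \<le> n \<and> C \<subseteq> e i})"
  shows "\<exists>B \<subseteq> A. recursive_lang B \<and> infinite B \<and> (\<forall>i. C \<subseteq> e i \<longrightarrow> finite (B - e i))"
proof -
  define a where "a x \<longleftrightarrow> list_decode x \<in> A" for x
  define c where "c x \<longleftrightarrow> list_decode x \<in> C" for x
  define E where "E i x \<longleftrightarrow> list_decode x \<in> e i" for i x
  interpret diagonal_pick a c E .
  have good_iff: "(\<forall>x. c x \<longrightarrow> E i x) \<longleftrightarrow> C \<subseteq> e i" for i
    unfolding c_def E_def by (metis list_encode_inverse subset_iff)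
  have candidates: "infinite {w. a w \<and> (\<forall>i \<le> n. (\<forall>x. c x \<longrightarrow> E i x) \<longrightarrow> E i w)}" for n
  proof -
    have "list_encode ` (A \<inter> \<Inter>{e i | i. i \<le> n \<and> C \<subseteq> e i})
        \<subseteq> {w. a w \<and> (\<forall>i \<le> n. (\<forall>x. c x \<longrightarrow> E i x) \<longrightarrow> E i w)}"
      unfolding good_iff by (auto simp: a_def E_def)
    then show ?thesis
      using infinite[of n] finite_imageD[OF _ inj_on_subset[OF inj_list_encode subset_UNIV]]
      by (meson finite_subset)
  qed
  have "decidable 1 (\<lambda>xs. a (xs ! 0))" and "decidable 1 (\<lambda>xs. c (xs ! 0))"
    using assms(1,2) unfolding recursive_lang_def computable1_iff decidable_def a_def c_def .
  moreover have "decidable 2 (\<lambda>xs. E (xs ! 0) (xs ! 1))"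
    using computable_computable2[OF assms(3)] unfolding decidable_def E_def .
  ultimately have decidable_pick: "decidable 1 (\<lambda>xs. xs ! 0 \<in> range pick)"
    using decidable_range_pick[OF candidates] by blast
  define B where "B = list_decode ` range pick"
  have "B \<subseteq> A"
    unfolding B_def using pick_candidate[OF candidates] a_def by auto
  moreover have "recursive_lang B"
    using decidable_pick
    unfolding recursive_lang_def computable1_iff decidable_def B_def
    by (simp add: inj_image_mem_iff[OF inj_list_decode])
  moreover have "infinite B"
    unfolding B_def
    using strict_mono_pick[OF candidates] strict_mono_imp_inj_on range_inj_infinite
      finite_imageD inj_list_decode by (metis inj_on_subset subset_UNIV)
  moreover have "finite (B - e i)" if "C \<subseteq> e i" for i
  proof -
    have "E i (pick m)" if "i \<le> m" for m
      using pick_in_good[OF candidates] good_iff \<open>C \<subseteq> e i\<close> that by blast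
    then have "B - e i \<subseteq> list_decode ` pick ` {..<i}"
      unfolding B_def E_def by (auto intro!: imageI) (meson not_le)
    then show ?thesis by (rule finite_subset) simp
  qed
  ultimately show ?thesis by blast
qed

theorem theorem5p3:
  fixes k :: nat and \<L> :: "nat list set set" and C A :: "nat list set"
  assumes "k \<ge> 1"
    and "\<L> \<subseteq> Pow (words k)"
    and "nontrivial k \<L>"
    and "WP_recursive \<L>"
    and "\<And>Q1 Q2. Q1 \<in> \<L> \<Longrightarrow> Q2 \<in> \<L> \<Longrightarrow> Q1 \<union> Q2 \<in> \<L>"
    and "\<And>Q1 Q2. Q1 \<in> \<L> \<Longrightarrow> Q2 \<in> \<L> \<Longrightarrow> Q1 \<inter> Q2 \<in> \<L>"
    and "\<And>Q. Q \<in> \<L> \<Longrightarrow> words k - Q \<in> \<L>"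
    and "C \<subseteq> words k" and "A \<subseteq> words k"
    and "recursive_lang C" and "recursive_lang A"
    and "infinite A" and "A \<inter> C = {}"
    and "A \<notin> cclass1 k C \<L>"
  shows "\<exists>B. B \<subseteq> A \<and> recursive_lang B \<and> B \<in> ccore1 k C \<L>"
proof -
  obtain e where e: "range e = \<L>" "computable2 (\<lambda>i n. if list_decode n \<in> e i then 1 else 0)"
    using assms(4) unfolding WP_recursive_def by blast
  have "infinite (A \<inter> \<Inter>{e i | i. i \<le> n \<and> C \<subseteq> e i})" for n
    by (rule infinite_Int_Inter_if_not_cclass1[OF assms(3,6-9,12-14)]) (use e(1) in auto)
  then obtain B where B: "B \<subseteq> A" "recursive_lang B" "infinite B"
    and almost_inside: "\<And>i. C \<subseteq> e i \<Longrightarrow> finite (B - e i)"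
    using recursive_subset_almost_inside[OF assms(11,10) e(2)] by blast
  have "B' \<notin> cclass1 k C \<L>" if "B' \<subseteq> B" "infinite B'" for B'
  proof
    assume "B' \<in> cclass1 k C \<L>"
    then obtain i where "C \<subseteq> e i" "B' \<subseteq> B - e i"
      using e(1) \<open>B' \<subseteq> B\<close> unfolding cclass1_def by blast
    then show False using almost_inside finite_subset \<open>infinite B'\<close> by blast
  qed
  then have "B \<in> ccore1 k C \<L>"
    using B assms(9,13) unfolding ccore1_def by blast
  then show ?thesis using B by blast
qed

end
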